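(* Let $\mathfrak n$ be a finite-dimensional real non-singular 2-step nilpotent Lie algebra. Then $\mathfrak n$ admits no ad-invariant metric.
   Context: An ad-invariant metric on a Lie algebra $\mathfrak g$ is a non-degenerate symmetric bilinear form $\langle\,,\,\rangle$ on $\mathfrak g$ (not necessarily positive definite) satisfying $\langle [x,y],z\rangle+\langle y,[x,z]\rangle=0$ for all $x,y,z\in\mathfrak g$. A Lie algebra $\mathfrak n$ is 2-step nilpotent if $[\mathfrak n,\mathfrak n]\neq 0$ and $[\mathfrak n,[\mathfrak n,\mathfrak n]]=0$; then $\mathrm{ad}_x$ maps $\mathfrak n$ into the center $\mathfrak z$ of $\mathfrak n$ for every $x$. A 2-step nilpotent Lie algebra $\mathfrak n$ with center $\mathfrak z$ is called non-singular if for every $x\in\mathfrak n\setminus\mathfrak z$ the map $\mathrm{ad}_x:\mathfrak n\to\mathfrak z$ is surjective. *)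

theory Defs
  imports "HOL-Analysis.Analysis"
begin

text \<open>A finite-dimensional real Lie algebra is modelled as a type 'a of class
euclidean_space (any finite-dimensional real vector space; the inner product
is not used) together with a bracket operation.\<close>

definition lie_algebra :: "('a::real_vector \<Rightarrow> 'a \<Rightarrow> 'a) \<Rightarrow> bool" where
  "lie_algebra br \<longleftrightarrow>
     bilinear br \<and>
     (\<forall>x. br x x = 0) \<and>
     (\<forall>x y z. br x (br y z) + br y (br z x) + br z (br x y) = 0)"

definition lie_center :: "('a::real_vector \<Rightarrow> 'a \<Rightarrow> 'a) \<Rightarrow> 'a set" where
  "lie_center br = {z. \<forall>x. br x z = 0}"

definition two_step_nilpotent :: "('a::real_vector \<Rightarrow> 'a \<Rightarrow> 'a) \<Rightarrow> bool" where
  "two_step_nilpotent br \<longleftrightarrow>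
     (\<exists>x y. br x y \<noteq> 0) \<and> (\<forall>x y z. br x (br y z) = 0)"

definition nonsingular_2step :: "('a::real_vector \<Rightarrow> 'a \<Rightarrow> 'a) \<Rightarrow> bool" where
  "nonsingular_2step br \<longleftrightarrow>
     two_step_nilpotent br \<and>
     (\<forall>x. x \<notin> lie_center br \<longrightarrow> range (br x) = lie_center br)"

definition ad_invariant_metric ::
  "('a::real_vector \<Rightarrow> 'a \<Rightarrow> 'a) \<Rightarrow> ('a \<Rightarrow> 'a \<Rightarrow> real) \<Rightarrow> bool" where
  "ad_invariant_metric br B \<longleftrightarrow>
     bilinear B \<and>
     (\<forall>x y. B x y = B y x) \<and>
     (\<forall>x. (\<forall>y. B x y = 0) \<longrightarrow> x = 0) \<and>
     (\<forall>x y z. B (br x y) z + B y (br x z) = 0)"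

end

theory Submission
  imports Defs
begin

text \<open>Pick \<open>a\<close> outside the centre \<open>\<zz>\<close>. Then \<open>ad a\<close> maps onto \<open>\<zz>\<close> and kills both \<open>a\<close>
and \<open>\<zz>\<close>, so rank-nullity gives \<open>2 dim \<zz> < dim \<nn>\<close>. On the other hand, for any
ad-invariant metric the centre is the orthogonal complement of the derived algebra,
which here is \<open>\<zz>\<close> itself; an orthogonal complement has complementary dimension at least,
so \<open>dim \<nn> \<le> 2 dim \<zz>\<close>.\<close>

lemma dim_range_add_dim_kernel_le:
  fixes f :: "'a::euclidean_space \<Rightarrow> 'b::euclidean_space"
  assumes "linear f"
  shows "dim (range f) + dim {x. f x = 0} \<le> DIM('a)"
proof -
  let ?K = "{x. f x = 0}"
  let ?C = "{y \<in> UNIV. \<forall>x \<in> ?K. orthogonal x y}"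
  have subspace_K: "subspace ?K"
    using linear_subspace_kernel[OF assms] by (simp add: kernel_def)
  have dim_C: "dim ?C + dim ?K = DIM('a)"
    using dim_subspace_orthogonal_to_vectors[OF subspace_K subspace_UNIV] by simp
  have "range f \<subseteq> f ` ?C"
  proof
    fix v assume "v \<in> range f"
    then obtain u where u: "v = f u" by auto
    obtain y z where y: "y \<in> span ?K" and z: "\<And>w. w \<in> span ?K \<Longrightarrow> orthogonal z w"
      and u_eq: "u = y + z"
      using orthogonal_subspace_decomp_exists[of ?K u] by metis
    have "f y = 0"
      using y span_eq_iff[THEN iffD2, OF subspace_K] by simp
    then have "f u = f z"
      using u_eq linear_add[OF assms] by simp
    moreover have "z \<in> ?C"
      using z[OF span_base] by (auto simp: orthogonal_commute)
    ultimately show "v \<in> f ` ?C" using u by auto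
  qed
  then have "dim (range f) \<le> dim (f ` ?C)" by (rule dim_subset)
  also have "\<dots> \<le> dim ?C" by (rule dim_image_le[OF assms])
  finally show ?thesis using dim_C by simp
qed

lemma dim_bilinear_orthogonal_ge:
  fixes B :: "'b::euclidean_space \<Rightarrow> 'a::euclidean_space \<Rightarrow> real"
  assumes "bilinear B" and "subspace S"
  shows "DIM('a) \<le> dim S + dim {w. \<forall>c\<in>S. B c w = 0}"
proof -
  define g where "g c = (\<Sum>i\<in>Basis. B c i *\<^sub>R i)" for c
  have linear_g: "linear g"
    unfolding g_def
    by (rule linearI) (simp_all add: bilinear_ladd[OF assms(1)] bilinear_lmul[OF assms(1)]
        scaleR_add_left sum.distrib scaleR_sum_right)
  have g_represents: "g c \<bullet> w = B c w" for c w
  proof -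
    have "linear (B c)" using assms(1) by (simp add: bilinear_def)
    then have "B c w = (\<Sum>i\<in>Basis. (w \<bullet> i) * (B c i \<bullet> 1))"
      using Linear_Algebra.linear_componentwise[of "B c" w 1] by simp
    then show ?thesis
      unfolding g_def by (simp add: inner_sum_right inner_commute mult.commute)
  qed
  have "{w. \<forall>c\<in>S. B c w = 0} = {w \<in> UNIV. \<forall>x \<in> g ` S. orthogonal x w}"
    by (auto simp: orthogonal_def g_represents)
  moreover have "dim {w \<in> UNIV. \<forall>x \<in> g ` S. orthogonal x w} + dim (g ` S) = DIM('a)"
    using dim_subspace_orthogonal_to_vectors[OF linear_subspace_image[OF linear_g assms(2)]
        subspace_UNIV] by simp
  moreover have "dim (g ` S) \<le> dim S" by (rule dim_image_le[OF linear_g])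
  ultimately show ?thesis by simp
qed

lemma lie_bracket_antisym:
  assumes "lie_algebra br"
  shows "br y x = - br x y"
proof -
  have bilinear: "bilinear br" and alternating: "\<And>x. br x x = 0"
    using assms unfolding lie_algebra_def by blast+
  have "0 = br (x + y) (x + y)" using alternating by simp
  also have "\<dots> = br x x + br x y + br y x + br y y"
    by (simp add: bilinear_ladd[OF bilinear] bilinear_radd[OF bilinear])
  also have "\<dots> = br y x + br x y"
    by (simp add: alternating)
  finally show ?thesis by (simp add: eq_neg_iff_add_eq_0)
qed

lemma subspace_lie_center:
  assumes "bilinear br"
  shows "subspace (lie_center br)"
  unfolding subspace_def lie_center_def
  using bilinear_rzero[OF assms] bilinear_radd[OF assms] bilinear_rmul[OF assms] by auto

lemma nonsingular_2step_obtain_surjective_ad: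
  assumes "lie_algebra br" and "nonsingular_2step br"
  obtains a where "a \<notin> lie_center br" and "range (br a) = lie_center br"
proof -
  obtain a b where "br a b \<noteq> 0"
    using assms(2) unfolding nonsingular_2step_def two_step_nilpotent_def by blast
  then have "br b a \<noteq> 0"
    using lie_bracket_antisym[OF assms(1)] by (metis neg_0_equal_iff_equal)
  then have "a \<notin> lie_center br" by (auto simp: lie_center_def)
  with assms(2) show ?thesis
    using that unfolding nonsingular_2step_def by blast
qed

lemma double_dim_lie_center_less:
  fixes br :: "'a::euclidean_space \<Rightarrow> 'a \<Rightarrow> 'a"
  assumes "lie_algebra br"
    and "a \<notin> lie_center br" and "range (br a) = lie_center br"
  shows "2 * dim (lie_center br) < DIM('a)"
proof -
  let ?z = "lie_center br"
  have bilinear: "bilinear br" and "br a a = 0"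
    using assms(1) unfolding lie_algebra_def by blast+
  then have "insert a ?z \<subseteq> {y. br a y = 0}"
    by (auto simp: lie_center_def)
  then have "dim (insert a ?z) \<le> dim {y. br a y = 0}" by (rule dim_subset)
  moreover have "dim (insert a ?z) = dim ?z + 1"
    using assms(2) span_eq_iff[THEN iffD2, OF subspace_lie_center[OF bilinear]]
    by (simp add: dim_insert del: span_eq_iff)
  moreover have "dim (range (br a)) + dim {y. br a y = 0} \<le> DIM('a)"
    using bilinear by (intro dim_range_add_dim_kernel_le) (simp add: bilinear_def)
  ultimately show ?thesis using assms(3) by simp
qed

lemma lie_center_eq_orthogonal_brackets:
  assumes "ad_invariant_metric br B"
  shows "lie_center br = {w. \<forall>x y. B (br x y) w = 0}"
proof -
  have bilinear: "bilinear B" and sym: "\<And>x y. B x y = B y x"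
    and nondegenerate: "\<And>x. (\<forall>y. B x y = 0) \<Longrightarrow> x = 0"
    and invariant: "\<And>x y z. B (br x y) z = - B y (br x z)"
    using assms unfolding ad_invariant_metric_def by (auto simp: eq_neg_iff_add_eq_0)
  have "w \<in> lie_center br \<longleftrightarrow> (\<forall>x y. B (br x y) w = 0)" for w
  proof
    assume "w \<in> lie_center br"
    then show "\<forall>x y. B (br x y) w = 0"
      by (simp add: lie_center_def invariant bilinear_rzero[OF bilinear])
  next
    assume "\<forall>x y. B (br x y) w = 0"
    then have "br x w = 0" for x
      by (intro nondegenerate) (metis sym invariant neg_equal_0_iff_equal)
    then show "w \<in> lie_center br" by (simp add: lie_center_def)
  qed
  then show ?thesis by blast
qed

lemma lie_center_self_orthogonal:
  assumes "ad_invariant_metric br B" and "two_step_nilpotent br"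
    and "range (br a) = lie_center br"
  shows "{w. \<forall>c\<in>lie_center br. B c w = 0} = lie_center br"
proof -
  have "c \<in> lie_center br \<longleftrightarrow> (\<exists>x y. c = br x y)" for c
    using assms(2,3) unfolding two_step_nilpotent_def lie_center_def by blast
  then have "(\<forall>c\<in>lie_center br. B c w = 0) \<longleftrightarrow> (\<forall>x y. B (br x y) w = 0)" for w
    by auto
  then have "{w. \<forall>c\<in>lie_center br. B c w = 0} = {w. \<forall>x y. B (br x y) w = 0}"
    by simp
  also have "\<dots> = lie_center br"
    using lie_center_eq_orthogonal_brackets[OF assms(1)] by simp
  finally show ?thesis .
qed

theorem mainTheorem2:
  fixes br :: "'a::euclidean_space \<Rightarrow> 'a \<Rightarrow> 'a"
  assumes "lie_algebra br"
    and "nonsingular_2step br"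
  shows "\<not> (\<exists>B. ad_invariant_metric br B)"
proof
  assume "\<exists>B. ad_invariant_metric br B"
  then obtain B where metric: "ad_invariant_metric br B" ..
  obtain a where a: "a \<notin> lie_center br" and ad_a: "range (br a) = lie_center br"
    using nonsingular_2step_obtain_surjective_ad[OF assms] .
  have "2 * dim (lie_center br) < DIM('a)"
    using double_dim_lie_center_less[OF assms(1) a ad_a] .
  moreover have "DIM('a) \<le> dim (lie_center br) + dim (lie_center br)"
  proof -
    have "bilinear B" and "bilinear br" and "two_step_nilpotent br"
      using metric assms unfolding ad_invariant_metric_def lie_algebra_def nonsingular_2step_def
      by blast+
    then have "DIM('a) \<le> dim (lie_center br) + dim {w. \<forall>c\<in>lie_center br. B c w = 0}"
      by (intro dim_bilinear_orthogonal_ge subspace_lie_center)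
    then show ?thesis
      using lie_center_self_orthogonal[OF metric \<open>two_step_nilpotent br\<close> ad_a] by simp
  qed
  ultimately show False by simp
qed

end
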